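(* Let $T:\mathbb{Z}_{\ge 0}\to\mathbb{R}$ be given by $T(0)=0$ and $T(2n)=T(2n-1)=n$ for all $n\ge 1$. Then $T(mn) = T(m)T(n) + T(m-1)T(n-1)$ for all integers $m,n\ge 1$. *)

theory Defs
  imports "HOL-Analysis.Analysis"
begin

end

theory Submission imports Defs begin

text \<open>The hypotheses force \<open>T x = \<lceil>x/2\<rceil>\<close>, and \<open>\<lceil>(m-1)/2\<rceil> = \<lfloor>m/2\<rfloor>\<close> for \<open>m \<ge> 1\<close>.
  So the claim is the identity \<open>\<lceil>mn/2\<rceil> = \<lceil>m/2\<rceil>\<lceil>n/2\<rceil> + \<lfloor>m/2\<rfloor>\<lfloor>n/2\<rfloor>\<close>, valid for all
  naturals and checked directly in each of the four parity cases of \<open>m, n\<close>.\<close>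

lemma half_ceiling_mult:
  fixes m n :: nat
  shows "(m * n + 1) div 2 = (m + 1) div 2 * ((n + 1) div 2) + m div 2 * (n div 2)"
proof -
  have parity: "\<exists>p. k = 2 * p \<or> k = 2 * p + 1" for k :: nat by presburger
  obtain p where "m = 2 * p \<or> m = 2 * p + 1" using parity by blast
  moreover obtain q where "n = 2 * q \<or> n = 2 * q + 1" using parity by blast
  ultimately consider
      "m = 2 * p" "n = 2 * q" | "m = 2 * p" "n = 2 * q + 1"
    | "m = 2 * p + 1" "n = 2 * q" | "m = 2 * p + 1" "n = 2 * q + 1"
    by blast
  then show ?thesis
  proof cases
    case 1
    have "m * n + 1 = 2 * (2 * p * q) + 1" by (simp add: 1)
    then show ?thesis by (simp add: 1)
  next
    case 2
    have "m * n + 1 = 2 * (2 * p * q + p) + 1" by (simp add: 2 algebra_simps)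
    then show ?thesis by (simp add: 2)
  next
    case 3
    have "m * n + 1 = 2 * (2 * p * q + q) + 1" by (simp add: 3 algebra_simps)
    then show ?thesis by (simp add: 3)
  next
    case 4
    have "m * n + 1 = 2 * (2 * p * q + p + q + 1)" by (simp add: 4 algebra_simps)
    then show ?thesis by (simp add: 4)
  qed
qed

lemma half_ceiling_closed_form:
  fixes T :: "nat \<Rightarrow> real"
  assumes T0: "T 0 = 0"
    and Teven: "\<And>k. k \<ge> 1 \<Longrightarrow> T (2 * k) = real k"
    and Todd: "\<And>k. k \<ge> 1 \<Longrightarrow> T (2 * k - 1) = real k"
  shows "T x = real ((x + 1) div 2)"
proof (cases "even x")
  case True
  then obtain k where "x = 2 * k" by blast
  then show ?thesis using T0 Teven[of k] by (cases "k = 0") simp_all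
next
  case False
  then obtain k where "x = 2 * k + 1" by (blast elim: oddE)
  then have "x = 2 * (k + 1) - 1" by simp
  then show ?thesis using Todd[of "k + 1"] by simp
qed

theorem lemma3:
  fixes T :: "nat \<Rightarrow> real" and m n :: nat
  assumes T0: "T 0 = 0"
    and Teven: "\<And>k. k \<ge> 1 \<Longrightarrow> T (2 * k) = real k"
    and Todd: "\<And>k. k \<ge> 1 \<Longrightarrow> T (2 * k - 1) = real k"
    and "m \<ge> 1" and "n \<ge> 1"
  shows "T (m * n) = T m * T n + T (m - 1) * T (n - 1)"
proof -
  have T: "T x = real ((x + 1) div 2)" for x
    using half_ceiling_closed_form[OF T0 Teven Todd] .
  have "(m - 1 + 1) div 2 = m div 2" "(n - 1 + 1) div 2 = n div 2"
    using \<open>m \<ge> 1\<close> \<open>n \<ge> 1\<close> by simp_all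
  then show ?thesis
    unfolding T by (simp only: half_ceiling_mult of_nat_add of_nat_mult)
qed

end
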